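(* Let $A\in\mathbb{R}^{D\times k}$ be a nonnegative matrix of full column rank and let $\delta\ge0$. Then $$\lambda_\delta(A)=\max\{\|x\|_\infty-\delta\|x\|_1 \;:\; x\in\mathbb{R}^k,\ \|Ax\|_1\le 1\}.$$ Equivalently, $\lambda_\delta(A)$ equals the optimal value of the program: maximize $\mathrm{tr}(Q)-\delta\sum_{i,j}|Q_{ij}|$ over $Q\in\mathbb{R}^{k\times k}$ subject to $\sum_{i,j}|(QA^\top)_{ij}|\le 1$.
   Context: For a matrix $M$, $\|M\|_{\max}=\max_{i,j}|M_{ij}|$. For $\delta\ge 0$, $\lambda_\delta(A)$ denotes the optimal value of the convex program: minimize $\|B\|_{\max}$ over $B\in\mathbb{R}^{k\times D}$ subject to $\|BA-I_k\|_{\max}\le\delta$. *)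

theory Defs
  imports "HOL-Analysis.Analysis"
begin

definition maxnorm :: "real^'n^'m \<Rightarrow> real" where
  "maxnorm M = Max {\<bar>M $ i $ j\<bar> | i j. True}"

definition entry_l1 :: "real^'n^'m \<Rightarrow> real" where
  "entry_l1 M = (\<Sum>i\<in>UNIV. \<Sum>j\<in>UNIV. \<bar>M $ i $ j\<bar>)"

definition vec_l1 :: "real^'n \<Rightarrow> real" where
  "vec_l1 x = (\<Sum>i\<in>UNIV. \<bar>x $ i\<bar>)"

definition vec_linf :: "real^'n \<Rightarrow> real" where
  "vec_linf x = Max {\<bar>x $ i\<bar> | i. True}"

definition mtrace :: "real^'n^'n \<Rightarrow> real" where
  "mtrace Q = (\<Sum>i\<in>UNIV. Q $ i $ i)"

definition lambda_delta :: "real \<Rightarrow> real^'k^'D \<Rightarrow> real" where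
  "lambda_delta \<delta> A = Inf {maxnorm B | B :: real^'D^'k. maxnorm (B ** A - mat 1) \<le> \<delta>}"

definition is_max_of :: "real \<Rightarrow> real set \<Rightarrow> bool" where
  "is_max_of v S \<longleftrightarrow> v \<in> S \<and> (\<forall>y\<in>S. y \<le> v)"

end

theory Submission imports Defs begin

text \<open>Weak duality: for every feasible \<open>B\<close> the identity \<open>x = B (A x) - (B A - I) x\<close> gives
  \<open>\<bar>x\<^sub>i\<bar> \<le> \<parallel>B\<parallel>\<^sub>max \<parallel>A x\<parallel>\<^sub>1 + \<delta> \<parallel>x\<parallel>\<^sub>1\<close>, so every value of the maximisation problem is below
  \<open>\<lambda>\<^sub>\<delta>(A)\<close>. Strong duality: if \<open>v\<close> bounds the maximisation problem, then every unit vector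
  \<open>e\<^sub>i\<close> lies in the compact convex set \<open>A\<^sup>T[-v,v]\<^sup>D + [-\<delta>,\<delta>]\<^sup>k\<close>; otherwise a separating
  hyperplane produces \<open>x\<close> with \<open>x\<^sub>i > v \<parallel>A x\<parallel>\<^sub>1 + \<delta> \<parallel>x\<parallel>\<^sub>1\<close>, which contradicts the bound after
  rescaling. The vectors \<open>b\<^sub>i\<close> with \<open>e\<^sub>i = A\<^sup>T b\<^sub>i + d\<^sub>i\<close> are the rows of a feasible \<open>B\<close> with
  \<open>\<parallel>B\<parallel>\<^sub>max \<le> v\<close>. Injectivity of \<open>A\<close> makes the feasible set compact, so the maximum is
  attained. The matrix problem decouples into the vector problem for the rows of \<open>Q\<close>, and
  its value is attained by a rank-one \<open>Q\<close>.\<close>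

lemma finite_maxnorm_set: "finite {\<bar>M $ i $ j\<bar> | i j. True}"
proof -
  have "{\<bar>M $ i $ j\<bar> | i j. True} = (\<lambda>(i, j). \<bar>M $ i $ j\<bar>) ` UNIV" by auto
  then show ?thesis by simp
qed

lemma abs_component_le_maxnorm: "\<bar>M $ i $ j\<bar> \<le> maxnorm M"
  unfolding maxnorm_def by (rule Max_ge[OF finite_maxnorm_set]) auto

lemma maxnorm_le: "(\<And>i j. \<bar>M $ i $ j\<bar> \<le> c) \<Longrightarrow> maxnorm M \<le> c"
  unfolding maxnorm_def by (subst Max_le_iff[OF finite_maxnorm_set]) auto

lemma maxnorm_nonneg: "0 \<le> maxnorm M"
  using abs_component_le_maxnorm[of M] abs_ge_zero order_trans by blast

lemma vec_linf_eq_infnorm: "vec_linf x = infnorm x"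
  unfolding vec_linf_def infnorm_cart by (simp add: cSup_eq_Max full_SetCompr_eq)

lemma abs_component_le_vec_linf: "\<bar>x $ i\<bar> \<le> vec_linf x"
  unfolding vec_linf_eq_infnorm by (rule component_le_infnorm_cart)

lemma vec_linf_attained: "\<exists>i. vec_linf x = \<bar>x $ i\<bar>"
proof -
  have "vec_linf x \<in> {\<bar>x $ i\<bar> | i. True}"
    unfolding vec_linf_def by (rule Max_in) (auto simp: full_SetCompr_eq)
  then show ?thesis by auto
qed

lemma vec_l1_nonneg: "0 \<le> vec_l1 x"
  unfolding vec_l1_def by (simp add: sum_nonneg)

lemma vec_l1_scaleR: "vec_l1 (c *\<^sub>R x) = \<bar>c\<bar> * vec_l1 x"
  unfolding vec_l1_def by (simp add: abs_mult sum_distrib_left)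

lemma vec_l1_eq_0_iff: "vec_l1 x = 0 \<longleftrightarrow> x = 0"
  unfolding vec_l1_def by (simp add: sum_nonneg_eq_0_iff vec_eq_iff)

lemma continuous_on_vec_l1 [continuous_intros]:
  "continuous_on S f \<Longrightarrow> continuous_on S (\<lambda>x. vec_l1 (f x))"
  unfolding vec_l1_def by (intro continuous_intros)

lemma inner_sgn_vector: "inner y (\<chi> l. c * sgn (y $ l)) = c * vec_l1 (y :: real^'n)"
proof -
  have "y $ l * sgn (y $ l) = \<bar>y $ l\<bar>" for l
    by (cases "y $ l" "0::real" rule: linorder_cases) auto
  then show ?thesis
    by (simp add: inner_vec_def vec_l1_def sum_distrib_left algebra_simps)
qed

lemma abs_matrix_vector_component_le:
  assumes "\<And>j. \<bar>M $ i $ j\<bar> \<le> c"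
  shows "\<bar>(M *v y) $ i\<bar> \<le> c * vec_l1 y"
proof -
  have "\<bar>(M *v y) $ i\<bar> \<le> (\<Sum>j\<in>UNIV. \<bar>M $ i $ j\<bar> * \<bar>y $ j\<bar>)"
    unfolding matrix_vector_mult_def by (simp add: order_trans[OF sum_abs] abs_mult)
  also have "\<dots> \<le> (\<Sum>j\<in>UNIV. c * \<bar>y $ j\<bar>)"
    by (rule sum_mono) (simp add: assms mult_right_mono)
  finally show ?thesis by (simp add: vec_l1_def sum_distrib_left)
qed

lemma matrix_mult_transpose_row: "((Q :: real^'n^'m) ** transpose A) $ i = A *v (Q $ i)"
  by (simp add: vec_eq_iff matrix_matrix_mult_def matrix_vector_mult_def transpose_def mult.commute)

lemma lambda_delta_le:
  "maxnorm (B ** A - mat 1) \<le> \<delta> \<Longrightarrow> lambda_delta \<delta> A \<le> maxnorm B"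
  unfolding lambda_delta_def
  by (rule cInf_lower) (auto intro: maxnorm_nonneg simp: bdd_below_def)

lemma le_lambda_delta:
  assumes "maxnorm (B0 ** A - mat 1) \<le> \<delta>"
    and "\<And>B. maxnorm (B ** A - mat 1) \<le> \<delta> \<Longrightarrow> c \<le> maxnorm B"
  shows "c \<le> lambda_delta \<delta> A"
  unfolding lambda_delta_def by (rule cInf_greatest) (use assms in auto)

lemma component_le_maxnorm_mult_vec_l1:
  assumes "maxnorm (B ** A - mat 1) \<le> \<delta>"
  shows "x $ i - \<delta> * vec_l1 x \<le> maxnorm B * vec_l1 (A *v x)"
proof -
  let ?E = "B ** A - mat 1"
  have "x = (B ** A) *v x - ?E *v x"
    by (simp add: matrix_vector_mult_diff_rdistrib)
  then have "x $ i = (B *v (A *v x)) $ i - (?E *v x) $ i"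
    by (metis matrix_vector_mul_assoc vector_minus_component)
  moreover have "\<bar>(B *v (A *v x)) $ i\<bar> \<le> maxnorm B * vec_l1 (A *v x)"
    by (rule abs_matrix_vector_component_le) (rule abs_component_le_maxnorm)
  moreover have "\<bar>(?E *v x) $ i\<bar> \<le> \<delta> * vec_l1 x"
    by (rule abs_matrix_vector_component_le) (meson assms abs_component_le_maxnorm order_trans)
  ultimately show ?thesis by linarith
qed

lemma vector_value_le_maxnorm:
  assumes "maxnorm (B ** A - mat 1) \<le> \<delta>" and "vec_l1 (A *v x) \<le> 1"
  shows "vec_linf x - \<delta> * vec_l1 x \<le> maxnorm B"
proof -
  obtain i where i: "vec_linf x = \<bar>x $ i\<bar>" using vec_linf_attained by blast
  obtain s :: real where s: "s = 1 \<or> s = -1" "\<bar>x $ i\<bar> = (s *\<^sub>R x) $ i"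
    by (cases "x $ i \<ge> 0") (force intro: that)+
  have "(s *\<^sub>R x) $ i - \<delta> * vec_l1 (s *\<^sub>R x) \<le> maxnorm B * vec_l1 (A *v (s *\<^sub>R x))"
    by (rule component_le_maxnorm_mult_vec_l1[OF assms(1)])
  moreover have "maxnorm B * vec_l1 (A *v x) \<le> maxnorm B"
    using assms(2) maxnorm_nonneg[of B] by (simp add: mult_left_le)
  ultimately show ?thesis
    using s i by (auto simp: vec_l1_scaleR matrix_vector_mult_scaleR)
qed

lemma trace_value_le_maxnorm:
  assumes "maxnorm (B ** A - mat 1) \<le> \<delta>" and "entry_l1 (Q ** transpose A) \<le> 1"
  shows "mtrace Q - \<delta> * entry_l1 Q \<le> maxnorm B"
proof -
  have "mtrace Q - \<delta> * entry_l1 Q = (\<Sum>i\<in>UNIV. Q $ i $ i - \<delta> * vec_l1 (Q $ i))"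
    by (simp add: mtrace_def entry_l1_def vec_l1_def sum_subtractf sum_distrib_left)
  also have "\<dots> \<le> (\<Sum>i\<in>UNIV. maxnorm B * vec_l1 (A *v (Q $ i)))"
    by (rule sum_mono) (rule component_le_maxnorm_mult_vec_l1[OF assms(1)])
  also have "\<dots> = maxnorm B * entry_l1 (Q ** transpose A)"
    by (simp add: entry_l1_def vec_l1_def matrix_mult_transpose_row sum_distrib_left)
  also have "\<dots> \<le> maxnorm B"
    using assms(2) maxnorm_nonneg[of B] by (simp add: mult_left_le)
  finally show ?thesis .
qed

lemma rank_one_trace_witness:
  fixes x :: "real^'k" and A :: "real^'k^'D"
  shows "\<exists>Q :: real^'k^'k. mtrace Q - \<delta> * entry_l1 Q = vec_linf x - \<delta> * vec_l1 x
                          \<and> entry_l1 (Q ** transpose A) = vec_l1 (A *v x)"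
proof -
  obtain j where j: "vec_linf x = \<bar>x $ j\<bar>" using vec_linf_attained by blast
  define s :: real where "s = (if x $ j \<ge> 0 then 1 else -1)"
  define Q :: "real^'k^'k" where "Q = (\<chi> i l. if i = j then s * x $ l else 0)"
  have Q_row: "Q $ i = (if i = j then s *\<^sub>R x else 0)" for i
    by (simp add: Q_def vec_eq_iff)
  have s: "\<bar>s\<bar> = 1" "s * x $ j = \<bar>x $ j\<bar>"
    by (auto simp: s_def)
  have entry_l1_rows: "entry_l1 M = (\<Sum>i\<in>UNIV. vec_l1 (M $ i))" for M :: "real^'n^'k"
    by (simp add: entry_l1_def vec_l1_def)
  have QA_row: "(Q ** transpose A) $ i = (if i = j then s *\<^sub>R (A *v x) else 0)" for i
    by (simp add: matrix_mult_transpose_row Q_row matrix_vector_mult_scaleR)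
  have "entry_l1 (Q ** transpose A) = vec_l1 (A *v x)"
    unfolding entry_l1_rows QA_row by (simp add: vec_l1_def abs_mult s if_distrib cong: if_cong)
  moreover have "entry_l1 Q = vec_l1 x"
    by (simp add: entry_l1_rows Q_row vec_l1_def abs_mult s if_distrib cong: if_cong)
  moreover have "mtrace Q = vec_linf x"
    by (simp add: mtrace_def Q_def j s if_distrib cong: if_cong)
  ultimately show ?thesis by (intro exI[of _ Q]) simp
qed

lemma value_bound_homogeneous:
  fixes A :: "real^'k^'D"
  assumes inj: "inj ((*v) A)"
    and bound: "\<And>x. vec_l1 (A *v x) \<le> 1 \<Longrightarrow> vec_linf x - \<delta> * vec_l1 x \<le> v"
  shows "x $ i - \<delta> * vec_l1 x \<le> v * vec_l1 (A *v x)"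
proof (cases "A *v x = 0")
  case True
  then have "x = 0" using inj by (metis injD matrix_vector_mult_0_right)
  then show ?thesis by (simp add: vec_l1_def)
next
  case False
  define t where "t = vec_l1 (A *v x)"
  have t: "0 < t" using False vec_l1_eq_0_iff vec_l1_nonneg unfolding t_def
    by (metis order_le_less)
  define y where "y = (1 / t) *\<^sub>R x"
  have "vec_l1 (A *v y) = 1"
    using t by (simp add: y_def t_def matrix_vector_mult_scaleR vec_l1_scaleR)
  then have "vec_linf y - \<delta> * vec_l1 y \<le> v"
    using bound by simp
  then have "y $ i - \<delta> * vec_l1 y \<le> v"
    using abs_component_le_vec_linf[of y i] abs_ge_self[of "y $ i"] by linarith
  then have "(x $ i - \<delta> * vec_l1 x) / t \<le> v"
    using t by (simp add: y_def vec_l1_scaleR diff_divide_distrib)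
  then show ?thesis using t by (simp add: t_def pos_divide_le_eq mult.commute)
qed

lemma mem_cbox_cart_uniform:
  "b \<in> cbox (\<chi> _. - c) (\<chi> _. c) \<longleftrightarrow> (\<forall>l. \<bar>b $ l\<bar> \<le> (c :: real))"
  by (auto simp: mem_box_cart abs_le_iff minus_le_iff)

text \<open>Farkas' lemma for the \<open>i\<close>-th row of \<open>B\<close>, via a separating hyperplane.\<close>

lemma axis_decomposition:
  fixes A :: "real^'k^'D"
  assumes v: "0 \<le> v" and \<delta>: "0 \<le> \<delta>"
    and bound: "\<And>x. x $ i - \<delta> * vec_l1 x \<le> v * vec_l1 (A *v x)"
  shows "\<exists>b d. (\<forall>l. \<bar>b $ l\<bar> \<le> v) \<and> (\<forall>j. \<bar>d $ j\<bar> \<le> \<delta>) \<and> axis i 1 = transpose A *v b + d"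
proof (rule ccontr)
  assume no_decomposition: "\<not> ?thesis"
  define f where "f = (\<lambda>p :: (real^'D) \<times> (real^'k). transpose A *v fst p + snd p)"
  define C where "C = f ` (cbox (\<chi> _. - v) (\<chi> _. v) \<times> cbox (\<chi> _. - \<delta>) (\<chi> _. \<delta>))"
  have "linear f"
    unfolding f_def
    by (rule linearI) (auto simp: algebra_simps)
  then have "convex C" "compact C"
    unfolding C_def
    by (auto intro!: convex_linear_image convex_Times compact_continuous_image linear_continuous_on
        compact_Times simp: linear_conv_bounded_linear[symmetric])
  moreover have "axis i 1 \<notin> C"
    using no_decomposition unfolding C_def f_def by (force simp: mem_cbox_cart_uniform)
  ultimately obtain a c where a: "inner a (axis i 1) < c" "\<forall>z\<in>C. c < inner a z"
    using separating_hyperplane_closed_point compact_imp_closed by metis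
  define x where "x = - a"
  define b :: "real^'D" where "b = (\<chi> l. v * sgn ((A *v x) $ l))"
  define d :: "real^'k" where "d = (\<chi> l. \<delta> * sgn (x $ l))"
  have "f (b, d) \<in> C"
    unfolding C_def using v \<delta>
    by (auto simp: mem_cbox_cart_uniform b_def d_def abs_mult abs_sgn_eq)
  with a have "inner x (f (b, d)) < x $ i"
    by (auto simp: x_def inner_axis)
  moreover have "inner x (transpose A *v b) = inner (A *v x) b"
    by (metis dot_lmul_matrix vector_transpose_matrix)
  then have "inner x (f (b, d)) = v * vec_l1 (A *v x) + \<delta> * vec_l1 x"
    using inner_sgn_vector[of "A *v x" v] inner_sgn_vector[of x \<delta>]
    by (simp add: f_def inner_add_right b_def d_def inner_commute)
  ultimately show False using bound[of x] by linarith
qed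

lemma exists_feasible_maxnorm_le:
  fixes A :: "real^'k^'D"
  assumes inj: "inj ((*v) A)" and \<delta>: "0 \<le> \<delta>"
    and bound: "\<And>x. vec_l1 (A *v x) \<le> 1 \<Longrightarrow> vec_linf x - \<delta> * vec_l1 x \<le> v"
  shows "\<exists>B :: real^'D^'k. maxnorm (B ** A - mat 1) \<le> \<delta> \<and> maxnorm B \<le> v"
proof -
  have "0 \<le> v"
    using bound[of 0] by (simp add: vec_l1_def vec_linf_eq_infnorm infnorm_0)
  then have "\<forall>i. \<exists>bd. (\<forall>l. \<bar>fst bd $ l\<bar> \<le> v) \<and> (\<forall>j. \<bar>snd bd $ j\<bar> \<le> \<delta>)
               \<and> axis i 1 = transpose A *v fst bd + snd bd"
    using axis_decomposition[OF _ \<delta> value_bound_homogeneous[OF inj bound]] by simp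
  then obtain bd where bd: "\<And>i l. \<bar>fst (bd i) $ l\<bar> \<le> v" "\<And>i j. \<bar>snd (bd i) $ j\<bar> \<le> \<delta>"
    "\<And>i. axis i 1 = transpose A *v fst (bd i) + snd (bd i)"
    by metis
  define B :: "real^'D^'k" where "B = (\<chi> i. fst (bd i))"
  have "(B ** A - mat 1) $ i $ j = - snd (bd i) $ j" for i j
  proof -
    have "(B ** A) $ i $ j = (transpose A *v fst (bd i)) $ j"
      by (simp add: B_def matrix_matrix_mult_def matrix_vector_mult_def transpose_def mult.commute)
    moreover have "(mat 1 :: real^'k^'k) $ i $ j = axis i 1 $ j"
      by (simp add: mat_def axis_def)
    ultimately show ?thesis using bd(3)[of i] by (simp add: vec_eq_iff)
  qed
  then have "maxnorm (B ** A - mat 1) \<le> \<delta>"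
    by (intro maxnorm_le) (simp add: bd(2))
  moreover have "maxnorm B \<le> v"
    by (rule maxnorm_le) (simp add: B_def bd(1))
  ultimately show ?thesis by blast
qed

lemma compact_vec_l1_sublevel:
  fixes A :: "real^'k^'D"
  assumes "inj ((*v) A)"
  shows "compact {x. vec_l1 (A *v x) \<le> c}"
proof -
  obtain L :: "real^'D^'k" where L: "L ** A = mat 1"
    using assms matrix_left_invertible_injective by blast
  obtain K where K: "\<And>y. norm (L *v y) \<le> norm y * K"
    using bounded_linear.bounded matrix_vector_mul_bounded_linear by blast
  have "norm x \<le> c * \<bar>K\<bar>" if "vec_l1 (A *v x) \<le> c" for x
  proof -
    have "norm x = norm (L *v (A *v x))"
      by (simp add: matrix_vector_mul_assoc L)
    also have "\<dots> \<le> norm (A *v x) * \<bar>K\<bar>"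
      using K[of "A *v x"] by (meson abs_ge_self mult_left_mono norm_ge_zero order_trans)
    also have "\<dots> \<le> c * \<bar>K\<bar>"
      using that norm_le_l1_cart[of "A *v x"] by (intro mult_right_mono) (auto simp: vec_l1_def)
    finally show ?thesis .
  qed
  then have "bounded {x. vec_l1 (A *v x) \<le> c}"
    unfolding bounded_iff by blast
  moreover have "closed {x. vec_l1 (A *v x) \<le> c}"
    by (intro closed_Collect_le continuous_intros)
  ultimately show ?thesis by (simp add: compact_eq_bounded_closed)
qed

lemma vector_program_attains_max:
  fixes A :: "real^'k^'D"
  assumes "inj ((*v) A)"
  obtains x0 where "vec_l1 (A *v x0) \<le> 1"
    and "\<And>x. vec_l1 (A *v x) \<le> 1 \<Longrightarrow> vec_linf x - \<delta> * vec_l1 x \<le> vec_linf x0 - \<delta> * vec_l1 x0"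
proof -
  have "continuous_on {x. vec_l1 (A *v x) \<le> 1} (\<lambda>x. vec_linf x - \<delta> * vec_l1 x)"
    unfolding vec_linf_eq_infnorm by (intro continuous_intros)
  moreover have "(0 :: real^'k) \<in> {x. vec_l1 (A *v x) \<le> 1}"
    by (simp add: vec_l1_def)
  ultimately show ?thesis
    using continuous_attains_sup[OF compact_vec_l1_sublevel[OF assms]] that by blast
qed

theorem mainTheorem2:
  fixes A :: "real^'k^'D" and \<delta> :: real
  assumes nonneg: "\<forall>i j. A $ i $ j \<ge> 0"
    and fullrank: "rank A = CARD('k)"
    and delta: "\<delta> \<ge> 0"
  shows "is_max_of (lambda_delta \<delta> A)
           {vec_linf x - \<delta> * vec_l1 x | x :: real^'k. vec_l1 (A *v x) \<le> 1}
       \<and> is_max_of (lambda_delta \<delta> A)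
           {mtrace Q - \<delta> * entry_l1 Q | Q :: real^'k^'k. entry_l1 (Q ** transpose A) \<le> 1}"
proof -
  have inj: "inj ((*v) A)"
    using fullrank full_rank_injective by blast
  obtain x0 where x0: "vec_l1 (A *v x0) \<le> 1"
    and max: "\<And>x. vec_l1 (A *v x) \<le> 1 \<Longrightarrow> vec_linf x - \<delta> * vec_l1 x \<le> vec_linf x0 - \<delta> * vec_l1 x0"
    using vector_program_attains_max[OF inj] by blast
  obtain B0 where B0: "maxnorm (B0 ** A - mat 1) \<le> \<delta>"
    and "maxnorm B0 \<le> vec_linf x0 - \<delta> * vec_l1 x0"
    using exists_feasible_maxnorm_le[OF inj delta max] by blast
  moreover have "vec_linf x0 - \<delta> * vec_l1 x0 \<le> lambda_delta \<delta> A"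
    using le_lambda_delta[OF B0] vector_value_le_maxnorm[OF _ x0] by blast
  ultimately have lambda: "lambda_delta \<delta> A = vec_linf x0 - \<delta> * vec_l1 x0"
    using lambda_delta_le[OF B0] by linarith
  obtain Q0 :: "real^'k^'k" where "mtrace Q0 - \<delta> * entry_l1 Q0 = lambda_delta \<delta> A"
    and "entry_l1 (Q0 ** transpose A) \<le> 1"
    using rank_one_trace_witness[of \<delta> x0 A] x0 lambda by auto
  moreover have "mtrace Q - \<delta> * entry_l1 Q \<le> lambda_delta \<delta> A"
    if "entry_l1 (Q ** transpose A) \<le> 1" for Q :: "real^'k^'k"
    using le_lambda_delta[OF B0] trace_value_le_maxnorm[OF _ that] by blast
  ultimately show ?thesis
    unfolding is_max_of_def using x0 max lambda by auto metis
qed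

end
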